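(* Fix $\eta\in[0,1]$ and an integer $N\ge1$, and consider the boosted BEHC$(N)$ driven by strategies as in the context. Let $i\ge N+1$, let $x^{i-1}$ be such that $x_{i-N}^{i-1}\ne\mathbf 0^{N}$, and let $\hat u^{i}\in\{a,b\}^{i}$ be such that $\hat u_l=b$ for some $l\in[k_{i-1}:i-1]$. Then $$P(x_i\mid \hat u^{i},x^{i-1})=P\big(x_i\mid \hat u_l^{i},\,q_{i-1}(x_{i-N}^{i-1})\big)$$ (for all $x_i$, whenever the conditioning events have positive probability).
   Context: $\bar\eta=1-\eta$, $[a:b]=\{a,\dots,b\}$, $x_j^{k}=(x_j,\dots,x_k)$. $\mathcal Q=[0:N]$, $g_U(q,1)=0$, $g_U(q,0)=q+1$ for $q\in[0:N-1]$, $g_U(N,0)=N$. BEHC battery law $P(S_i=0\mid x_i,s_{i-1})=\bar\eta\,\mathbb{1}\{x_i=s_{i-1}\}$ for $x_i\le s_{i-1}$; modified law $P_U(s_i\mid x_i,s_{i-1},q_{i-1})=\mathbb{1}\{s_i=1\}$ if $q_{i-1}\in\{N-1,N\}$ and $x_i=0$, otherwise the BEHC law. Strategies: $\hat u\in\{a,b\}$ with $f_a(s)=0$ and $f_b(s)=s$. The joint distribution of $(s_0^n,\hat u^n,x^n,q_0^n)$ is $$\mathbb{1}\{s_0=0,q_0=0\}\prod_{i=1}^{n}P(\hat u_i\mid\hat u^{i-1},x^{i-1})\,\mathbb{1}\{x_i=f_{\hat u_i}(s_{i-1})\}\,P_U(s_i\mid x_i,s_{i-1},q_{i-1})\,\mathbb{1}\{q_i=g_U(q_{i-1},x_i)\},$$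 where the conditionals $P(\hat u_i\mid\hat u^{i-1},x^{i-1})$ are arbitrary. For $i\ge N+1$, $q_{i-1}=q_{i-1}(x_{i-N}^{i-1})$ is the number of 0's following the last 1 in $x_{i-N}^{i-1}$ ($=N$ if all are 0), and $k_{i-1}=i-(q_{i-1}+1)$, i.e. $k_{i-1}$ is the index of the last 1 among $x_{i-N}^{i-1}$ if there is one, and $i-(N+1)$ otherwise. *)

theory Defs
  imports "HOL-Library.FuncSet" Complex_Main
begin

text \<open>Strategies: True encodes b (f_b(s) = s), False encodes a (f_a(s) = 0).
  Channel inputs x, battery states s are naturals in {0,1}; q in [0:N].\<close>

definition fstrat :: "bool \<Rightarrow> nat \<Rightarrow> nat" where
  "fstrat u s = (if u then s else 0)"

definition gU :: "nat \<Rightarrow> nat \<Rightarrow> nat \<Rightarrow> nat" where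
  "gU N q x = (if x = 1 then 0 else if q < N then q + 1 else N)"

text \<open>BEHC battery law: P(S_i = s' | x_i = x, S_{i-1} = s), with
  P(S_i=0|x,s) = (1-eta) * 1{x = s}.\<close>
definition PB :: "real \<Rightarrow> nat \<Rightarrow> nat \<Rightarrow> nat \<Rightarrow> real" where
  "PB \<eta> s' x s = (if s' = 0 then (1 - \<eta>) * (if x = s then 1 else 0)
                   else 1 - (1 - \<eta>) * (if x = s then 1 else 0))"

definition PU :: "real \<Rightarrow> nat \<Rightarrow> nat \<Rightarrow> nat \<Rightarrow> nat \<Rightarrow> nat \<Rightarrow> real" where
  "PU \<eta> N s' x s q = (if (q = N - 1 \<or> q = N) \<and> x = 0 then (if s' = 1 then 1 else 0)
                      else PB \<eta> s' x s)"

definition ind :: "bool \<Rightarrow> real" where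
  "ind b = (if b then 1 else 0)"

text \<open>A policy pol us xs u = P(u_i = u | u^{i-1} = us, x^{i-1} = xs), where
  us = [u_1,...,u_{i-1}] and xs = [x_1,...,x_{i-1}].\<close>
definition valid_policy :: "(bool list \<Rightarrow> nat list \<Rightarrow> bool \<Rightarrow> real) \<Rightarrow> bool" where
  "valid_policy pol \<longleftrightarrow> (\<forall>us xs u. 0 \<le> pol us xs u) \<and>
                          (\<forall>us xs. pol us xs True + pol us xs False = 1)"

text \<open>Trajectory (s_0^n, u_1^n, x_1^n, q_0^n).\<close>
type_synonym traj = "(nat \<Rightarrow> nat) \<times> (nat \<Rightarrow> bool) \<times> (nat \<Rightarrow> nat) \<times> (nat \<Rightarrow> nat)"

definition Omega :: "nat \<Rightarrow> nat \<Rightarrow> traj set" where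
  "Omega N n = PiE {0..n} (\<lambda>_. {0,1}) \<times> PiE {1..n} (\<lambda>_. UNIV)
               \<times> PiE {1..n} (\<lambda>_. {0,1}) \<times> PiE {0..n} (\<lambda>_. {0..N})"

definition joint :: "real \<Rightarrow> nat \<Rightarrow> (bool list \<Rightarrow> nat list \<Rightarrow> bool \<Rightarrow> real) \<Rightarrow> nat \<Rightarrow> traj \<Rightarrow> real" where
  "joint \<eta> N pol n \<omega> = (case \<omega> of (s, u, x, q) \<Rightarrow>
     ind (s 0 = 0 \<and> q 0 = 0) *
     (\<Prod>j\<in>{1..n}. pol (map u [1..<j]) (map x [1..<j]) (u j)
        * ind (x j = fstrat (u j) (s (j - 1)))
        * PU \<eta> N (s j) (x j) (s (j - 1)) (q (j - 1))
        * ind (q j = gU N (q (j - 1)) (x j))))"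

definition prb :: "real \<Rightarrow> nat \<Rightarrow> (bool list \<Rightarrow> nat list \<Rightarrow> bool \<Rightarrow> real) \<Rightarrow> nat \<Rightarrow> traj set \<Rightarrow> real" where
  "prb \<eta> N pol n E = (\<Sum>\<omega>\<in>Omega N n \<inter> E. joint \<eta> N pol n \<omega>)"

definition cprb :: "real \<Rightarrow> nat \<Rightarrow> (bool list \<Rightarrow> nat list \<Rightarrow> bool \<Rightarrow> real) \<Rightarrow> nat \<Rightarrow> traj set \<Rightarrow> traj set \<Rightarrow> real" where
  "cprb \<eta> N pol n A B = prb \<eta> N pol n (A \<inter> B) / prb \<eta> N pol n B"

definition qwin :: "nat \<Rightarrow> (nat \<Rightarrow> nat) \<Rightarrow> nat \<Rightarrow> nat" where
  "qwin N x i = (if \<exists>j\<in>{i-N..i-1}. x j = 1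
                 then (i - 1) - (GREATEST j. j \<in> {i-N..i-1} \<and> x j = 1)
                 else N)"

end

theory Submission
  imports Defs
begin

text \<open>Let \<open>k\<close> be the time of the last \<open>1\<close> among \<open>x\<^sub>i\<^sub>-\<^sub>N, \<dots>, x\<^sub>i\<^sub>-\<^sub>1\<close>. For \<open>k \<le> j \<le> i - 2\<close> the
  counter is \<open>q\<^sub>j = j - k \<le> N - 2\<close>, so up to time \<open>i - 1\<close> the battery moves by the unmodified BEHC
  law. Since \<open>u\<^sub>l = b\<close>, the input \<open>x\<^sub>l = s\<^sub>l\<^sub>-\<^sub>1\<close> pins the battery state at time \<open>l - 1\<close>. Summing the
  joint law backwards from time \<open>i\<close> to time \<open>l - 1\<close> therefore factors the weight of either
  conditioning event, jointly with \<open>x\<^sub>i\<close>, into a battery kernel that depends only on \<open>u\<^sub>l\<^sup>i\<close> and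
  \<open>x\<^sub>l\<^sup>i\<^sup>-\<^sup>1\<close> (which \<open>q\<^sub>i\<^sub>-\<^sub>1\<close> determines) times a constant independent of \<open>x\<^sub>i\<close>; the constant
  cancels in the conditional probability.\<close>

section \<open>Trajectory sums\<close>

type_synonym policy = "bool list \<Rightarrow> nat list \<Rightarrow> bool \<Rightarrow> real"
type_synonym slot = "nat \<times> bool \<times> nat \<times> nat"

lemma mult_ind_right: "(z::real) * ind P = (if P then z else 0)"
  by (simp add: ind_def)

lemma ind_mult_left: "ind P * (z::real) = (if P then z else 0)"
  by (simp add: ind_def)

definition traj_sum :: "real \<Rightarrow> nat \<Rightarrow> policy \<Rightarrow> nat \<Rightarrow> (traj \<Rightarrow> real) \<Rightarrow> real" where
  "traj_sum \<eta> N pol n F = (\<Sum>\<omega>\<in>Omega N n. joint \<eta> N pol n \<omega> * F \<omega>)"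

definition slots :: "nat \<Rightarrow> slot set" where
  "slots N = {0,1} \<times> UNIV \<times> {0,1} \<times> {0..N}"

definition traj_extend :: "nat \<Rightarrow> traj \<Rightarrow> slot \<Rightarrow> traj" where
  "traj_extend j \<omega> t = (case \<omega> of (s,u,x,q) \<Rightarrow> case t of (a,v,y,r) \<Rightarrow>
     (s(Suc j := a), u(Suc j := v), x(Suc j := y), q(Suc j := r)))"

definition traj_split :: "nat \<Rightarrow> traj \<Rightarrow> traj \<times> slot" where
  "traj_split j \<omega> = (case \<omega> of (s,u,x,q) \<Rightarrow>
     ((s(Suc j := undefined), u(Suc j := undefined), x(Suc j := undefined), q(Suc j := undefined)),
      (s (Suc j), u (Suc j), x (Suc j), q (Suc j))))"

definition slot_weight :: "real \<Rightarrow> nat \<Rightarrow> policy \<Rightarrow> nat \<Rightarrow> traj \<Rightarrow> slot \<Rightarrow> real" where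
  "slot_weight \<eta> N pol j \<omega> t = (case \<omega> of (s,u,x,q) \<Rightarrow> case t of (a,v,y,r) \<Rightarrow>
     pol (map u [1..<Suc j]) (map x [1..<Suc j]) v * ind (y = fstrat v (s j))
     * PU \<eta> N a y (s j) (q j) * ind (r = gU N (q j) y))"

lemma joint_traj_extend:
  "joint \<eta> N pol (Suc j) (traj_extend j \<omega> t) = joint \<eta> N pol j \<omega> * slot_weight \<eta> N pol j \<omega> t"
proof -
  obtain s u x q where \<omega>: "\<omega> = (s,u,x,q)" by (cases \<omega>) auto
  obtain a v y r where t: "t = (a,v,y,r)" by (cases t) auto
  define factor where "factor = (\<lambda>(s::nat\<Rightarrow>nat) (u::nat\<Rightarrow>bool) (x::nat\<Rightarrow>nat) (q::nat\<Rightarrow>nat) k.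
     pol (map u [1..<k]) (map x [1..<k]) (u k) * ind (x k = fstrat (u k) (s (k - 1)))
     * PU \<eta> N (s k) (x k) (s (k - 1)) (q (k - 1)) * ind (q k = gU N (q (k - 1)) (x k)))"
  have joint: "joint \<eta> N pol n (s,u,x,q) = ind (s 0 = 0 \<and> q 0 = 0) * prod (factor s u x q) {1..n}"
    for n s u x q
    unfolding joint_def factor_def by simp
  have map_upd: "map (f(Suc j := b)) [1..<m] = map f [1..<m]" if "m \<le> Suc j" for f :: "nat \<Rightarrow> 'b" and b m
    using that by (auto intro!: map_cong)
  have "prod (factor (s(Suc j:=a)) (u(Suc j:=v)) (x(Suc j:=y)) (q(Suc j:=r))) {1..j} = prod (factor s u x q) {1..j}"
    by (rule prod.cong) (auto simp: map_upd factor_def)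
  moreover have "factor (s(Suc j:=a)) (u(Suc j:=v)) (x(Suc j:=y)) (q(Suc j:=r)) (Suc j) = slot_weight \<eta> N pol j \<omega> t"
    unfolding factor_def slot_weight_def \<omega> t by (simp add: map_upd)
  ultimately show ?thesis
    unfolding \<omega> t traj_extend_def prod.case joint by (simp add: mult.assoc)
qed

lemma fun_upd_Suc_in_PiE:
  "f \<in> PiE {m..j} (\<lambda>_. B) \<Longrightarrow> b \<in> B \<Longrightarrow> m \<le> Suc j \<Longrightarrow> f(Suc j := b) \<in> PiE {m..Suc j} (\<lambda>_. B)"
  by (simp add: atLeastAtMostSuc_conv PiE_fun_upd)

lemma fun_upd_Suc_undefined_in_PiE:
  "g \<in> PiE {m..Suc j} (\<lambda>_. B) \<Longrightarrow> g(Suc j := undefined) \<in> PiE {m..j} (\<lambda>_. B)"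
  by (auto simp: PiE_iff extensional_def)

lemma bij_betw_traj_extend:
  "bij_betw (\<lambda>(\<omega>,t). traj_extend j \<omega> t) (Omega N j \<times> slots N) (Omega N (Suc j))"
proof (rule bij_betw_byWitness[where f' = "traj_split j"])
  have upd_undefined: "f(Suc j := undefined) = f" if "f \<in> PiE {m..j} B" for f :: "nat \<Rightarrow> 'b" and m B
    using that by (auto simp: PiE_iff extensional_def)
  show "\<forall>p\<in>Omega N j \<times> slots N. traj_split j ((\<lambda>(\<omega>,t). traj_extend j \<omega> t) p) = p"
    by (auto simp: Omega_def traj_split_def traj_extend_def upd_undefined)
  show "\<forall>p\<in>Omega N (Suc j). (\<lambda>(\<omega>,t). traj_extend j \<omega> t) (traj_split j p) = p"
    by (auto simp: Omega_def traj_split_def traj_extend_def)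
  show "(\<lambda>(\<omega>,t). traj_extend j \<omega> t) ` (Omega N j \<times> slots N) \<subseteq> Omega N (Suc j)"
    by (clarsimp simp: Omega_def slots_def traj_extend_def simp del: atLeastAtMost_iff)
      (intro conjI fun_upd_Suc_in_PiE; simp)
  show "traj_split j ` Omega N (Suc j) \<subseteq> Omega N j \<times> slots N"
    by (clarsimp simp: Omega_def slots_def traj_split_def simp del: atLeastAtMost_iff)
      (intro conjI fun_upd_Suc_undefined_in_PiE; auto simp: PiE_iff)
qed

lemma traj_sum_Suc:
  "traj_sum \<eta> N pol (Suc j) F
     = traj_sum \<eta> N pol j (\<lambda>\<omega>. \<Sum>t\<in>slots N. slot_weight \<eta> N pol j \<omega> t * F (traj_extend j \<omega> t))"
proof -
  have "traj_sum \<eta> N pol (Suc j) F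
      = (\<Sum>(\<omega>,t)\<in>Omega N j \<times> slots N. joint \<eta> N pol (Suc j) (traj_extend j \<omega> t) * F (traj_extend j \<omega> t))"
    unfolding traj_sum_def
    by (subst sum.reindex_bij_betw[OF bij_betw_traj_extend, symmetric]) (simp add: case_prod_unfold)
  also have "\<dots> = (\<Sum>\<omega>\<in>Omega N j. \<Sum>t\<in>slots N. joint \<eta> N pol j \<omega> * (slot_weight \<eta> N pol j \<omega> t * F (traj_extend j \<omega> t)))"
    unfolding sum.cartesian_product[symmetric] by (simp add: joint_traj_extend mult.assoc)
  finally show ?thesis
    by (simp add: traj_sum_def sum_distrib_left)
qed

lemma traj_sum_cong:
  "(\<And>\<omega>. \<omega> \<in> Omega N j \<Longrightarrow> joint \<eta> N pol j \<omega> \<noteq> 0 \<Longrightarrow> F \<omega> = G \<omega>)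
   \<Longrightarrow> traj_sum \<eta> N pol j F = traj_sum \<eta> N pol j G"
  unfolding traj_sum_def by (rule sum.cong) auto

lemma traj_sum_sum:
  "traj_sum \<eta> N pol j (\<lambda>\<omega>. \<Sum>r\<in>A. c r * G r \<omega>) = (\<Sum>r\<in>A. c r * traj_sum \<eta> N pol j (G r))"
  unfolding traj_sum_def sum_distrib_left by (subst sum.swap) (simp add: ac_simps)

lemma Omega_last:
  "(s,u,x,q) \<in> Omega N j \<Longrightarrow> s j \<in> {0,1} \<and> q j \<le> N"
  by (auto simp: Omega_def PiE_iff)

lemma sum_slots:
  assumes "(s,u,x,q) \<in> Omega N j"
  shows "(\<Sum>t\<in>slots N. slot_weight \<eta> N pol j (s,u,x,q) t * G t) =
    (\<Sum>v\<in>UNIV. pol (map u [1..<Suc j]) (map x [1..<Suc j]) v *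
       (\<Sum>a\<in>{0,1}. PU \<eta> N a (fstrat v (s j)) (s j) (q j) * G (a, v, fstrat v (s j), gU N (q j) (fstrat v (s j)))))"
proof -
  have counter: "(\<Sum>r\<in>{0..N}. ind (r = gU N (q j) y) * Z r) = Z (gU N (q j) y)" for y and Z :: "nat \<Rightarrow> real"
    using Omega_last[OF assms] by (simp add: ind_mult_left gU_def)
  have input: "(\<Sum>y\<in>{0,1}. ind (y = fstrat v (s j)) * Z y) = Z (fstrat v (s j))" for v and Z :: "nat \<Rightarrow> real"
    using Omega_last[OF assms] by (auto simp: ind_mult_left fstrat_def)
  have "(\<Sum>t\<in>slots N. slot_weight \<eta> N pol j (s,u,x,q) t * G t) =
     (\<Sum>a\<in>{0,1}. \<Sum>v\<in>UNIV. \<Sum>y\<in>{0,1}. \<Sum>r\<in>{0..N}. ind (r = gU N (q j) y) * (ind (y = fstrat v (s j)) *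
        (pol (map u [1..<Suc j]) (map x [1..<Suc j]) v * (PU \<eta> N a y (s j) (q j) * G (a,v,y,r)))))"
    unfolding slots_def sum.cartesian_product' slot_weight_def by (simp add: ac_simps)
  also have "\<dots> = (\<Sum>a\<in>{0,1}. \<Sum>v\<in>UNIV. pol (map u [1..<Suc j]) (map x [1..<Suc j]) v
       * (PU \<eta> N a (fstrat v (s j)) (s j) (q j) * G (a, v, fstrat v (s j), gU N (q j) (fstrat v (s j)))))"
    by (simp only: counter input)
  finally show ?thesis
    by (simp only: sum_distrib_left sum.swap[of _ "{0,1}"])
qed

lemma sum_PU: "(\<Sum>a\<in>{0,1}. PU \<eta> N a y s q) = 1"
  by (simp add: PU_def PB_def)

lemma sum_slot_weight:
  assumes "valid_policy pol" "\<omega> \<in> Omega N j"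
  shows "(\<Sum>t\<in>slots N. slot_weight \<eta> N pol j \<omega> t) = 1"
proof -
  obtain s u x q where \<omega>: "\<omega> = (s,u,x,q)" by (cases \<omega>) auto
  have "(\<Sum>t\<in>slots N. slot_weight \<eta> N pol j \<omega> t * 1)
      = (\<Sum>v\<in>UNIV. pol (map u [1..<Suc j]) (map x [1..<Suc j]) v * (\<Sum>a\<in>{0,1}. PU \<eta> N a (fstrat v (s j)) (s j) (q j) * 1))"
    using assms(2) unfolding \<omega> by (rule sum_slots)
  also have "\<dots> = 1"
    using assms(1) unfolding mult_1_right sum_PU by (simp add: UNIV_bool valid_policy_def add.commute del: upt_Suc)
  finally show ?thesis by simp
qed

lemma traj_sum_Suc_eq:
  assumes "valid_policy pol" "\<And>\<omega> t. F (traj_extend j \<omega> t) = F \<omega>"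
  shows "traj_sum \<eta> N pol (Suc j) F = traj_sum \<eta> N pol j F"
proof -
  have "traj_sum \<eta> N pol (Suc j) F = traj_sum \<eta> N pol j (\<lambda>\<omega>. (\<Sum>t\<in>slots N. slot_weight \<eta> N pol j \<omega> t) * F \<omega>)"
    unfolding traj_sum_Suc assms(2) sum_distrib_right ..
  also have "\<dots> = traj_sum \<eta> N pol j F"
    by (rule traj_sum_cong) (simp add: sum_slot_weight[OF assms(1)])
  finally show ?thesis .
qed

lemma traj_sum_horizon:
  assumes "valid_policy pol" "i \<le> n" "\<And>j \<omega> t. i \<le> j \<Longrightarrow> F (traj_extend j \<omega> t) = F \<omega>"
  shows "traj_sum \<eta> N pol n F = traj_sum \<eta> N pol i F"
  using assms(2)
proof (induction n rule: dec_induct)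
  case (step n)
  have "traj_sum \<eta> N pol (Suc n) F = traj_sum \<eta> N pol n F"
    by (rule traj_sum_Suc_eq[OF assms(1)]) (use step.hyps assms(3) in auto)
  with step.IH show ?case by simp
qed simp

definition determined_upto :: "nat \<Rightarrow> traj set \<Rightarrow> bool" where
  "determined_upto i E \<longleftrightarrow> (\<forall>s u x q s' u' x' q'. (\<forall>t\<le>i. u t = u' t \<and> x t = x' t)
     \<longrightarrow> ((s,u,x,q) \<in> E \<longleftrightarrow> (s',u',x',q') \<in> E))"

lemma determined_uptoD:
  "determined_upto i E \<Longrightarrow> \<forall>t\<le>i. u t = u' t \<and> x t = x' t \<Longrightarrow> (s,u,x,q) \<in> E \<longleftrightarrow> (s',u',x',q') \<in> E"
  unfolding determined_upto_def by blast

lemma determined_upto_Int: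
  assumes "determined_upto i E" "determined_upto i F"
  shows "determined_upto i (E \<inter> F)"
  unfolding determined_upto_def
proof (intro allI impI)
  fix s s' x x' q q' :: "nat \<Rightarrow> nat" and u u' :: "nat \<Rightarrow> bool"
  assume agree: "\<forall>t\<le>i. u t = u' t \<and> x t = x' t"
  show "(s,u,x,q) \<in> E \<inter> F \<longleftrightarrow> (s',u',x',q') \<in> E \<inter> F"
    using determined_uptoD[OF assms(1) agree] determined_uptoD[OF assms(2) agree] by blast
qed

lemma traj_extend_mem_iff:
  assumes "determined_upto i E" "i \<le> j"
  shows "traj_extend j \<omega> t \<in> E \<longleftrightarrow> \<omega> \<in> E"
proof -
  obtain s u x q where \<omega>: "\<omega> = (s,u,x,q)" by (cases \<omega>) auto
  obtain a v y r where t: "t = (a,v,y,r)" by (cases t) auto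
  have "\<forall>t'\<le>i. (u(Suc j := v)) t' = u t' \<and> (x(Suc j := y)) t' = x t'"
    using assms(2) by auto
  from determined_uptoD[of i E "u(Suc j := v)" u "x(Suc j := y)" x "s(Suc j := a)" "q(Suc j := r)" s q, OF assms(1) this]
  show ?thesis
    unfolding \<omega> t traj_extend_def by simp
qed

lemma prb_eq_traj_sum:
  assumes "valid_policy pol" "i \<le> n" "determined_upto i E"
  shows "prb \<eta> N pol n E = traj_sum \<eta> N pol i (\<lambda>\<omega>. ind (\<omega> \<in> E))"
proof -
  have "finite (Omega N n)"
    unfolding Omega_def by (intro finite_cartesian_product finite_PiE) auto
  then have "prb \<eta> N pol n E = traj_sum \<eta> N pol n (\<lambda>\<omega>. ind (\<omega> \<in> E))"
    unfolding prb_def traj_sum_def by (simp add: sum.inter_restrict mult_ind_right)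
  also have "\<dots> = traj_sum \<eta> N pol i (\<lambda>\<omega>. ind (\<omega> \<in> E))"
    by (rule traj_sum_horizon[OF assms(1,2)]) (simp add: traj_extend_mem_iff[OF assms(3)])
  finally show ?thesis .
qed

section \<open>The counter and the battery kernel\<close>

lemma counter_step_of_joint_nonzero:
  assumes "joint \<eta> N pol n (s,u,x,q) \<noteq> 0" "t \<in> {1..n}"
  shows "q t = gU N (q (t - 1)) (x t)"
proof -
  from assms(1) have "(\<Prod>j\<in>{1..n}. pol (map u [1..<j]) (map x [1..<j]) (u j)
        * ind (x j = fstrat (u j) (s (j - 1))) * PU \<eta> N (s j) (x j) (s (j - 1)) (q (j - 1))
        * ind (q j = gU N (q (j - 1)) (x j))) \<noteq> 0"
    unfolding joint_def by auto
  then have "ind (q t = gU N (q (t - 1)) (x t)) \<noteq> 0"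
    using assms(2) by simp
  then show ?thesis by (simp add: ind_def split: if_splits)
qed

lemma counter_since_one:
  assumes "joint \<eta> N pol n (s,u,x,q) \<noteq> 0" "1 \<le> k" "x k = 1"
    and "k + d \<le> n" "d \<le> N" "\<forall>t\<in>{k<..k+d}. x t = 0"
  shows "q (k + d) = d"
  using assms(4-6)
proof (induction d)
  case 0
  then show ?case using counter_step_of_joint_nonzero[OF assms(1), of k] assms(2,3) by (simp add: gU_def)
next
  case (Suc d)
  then have "q (k + d) = d" "x (Suc (k + d)) = 0" by auto
  then show ?case using counter_step_of_joint_nonzero[OF assms(1), of "Suc (k + d)"] Suc.prems by (simp add: gU_def)
qed

text \<open>\<open>battery_step \<eta> us xs j \<sigma> \<rho>\<close> is the weight of the battery moving from \<open>s\<^sub>j\<^sub>-\<^sub>1 = \<rho>\<close> to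
  \<open>s\<^sub>j = \<sigma>\<close> under the unmodified law while strategy \<open>us j\<close> emits \<open>xs j\<close>; \<open>battery_kernel \<eta> us xs l d \<sigma> \<tau>\<close>
  composes the steps \<open>l, \<dots>, l + d - 1\<close>, from \<open>s\<^sub>l\<^sub>-\<^sub>1 = \<tau>\<close> to \<open>s\<^sub>l\<^sub>+\<^sub>d\<^sub>-\<^sub>1 = \<sigma>\<close>.\<close>

definition battery_step :: "real \<Rightarrow> (nat \<Rightarrow> bool) \<Rightarrow> (nat \<Rightarrow> nat) \<Rightarrow> nat \<Rightarrow> nat \<Rightarrow> nat \<Rightarrow> real" where
  "battery_step \<eta> us xs j \<sigma> \<rho> = ind (fstrat (us j) \<rho> = xs j) * PB \<eta> \<sigma> (xs j) \<rho>"

fun battery_kernel :: "real \<Rightarrow> (nat \<Rightarrow> bool) \<Rightarrow> (nat \<Rightarrow> nat) \<Rightarrow> nat \<Rightarrow> nat \<Rightarrow> nat \<Rightarrow> nat \<Rightarrow> real" where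
  "battery_kernel \<eta> us xs l 0 \<sigma> \<tau> = ind (\<sigma> = \<tau>)"
| "battery_kernel \<eta> us xs l (Suc d) \<sigma> \<tau> =
     (\<Sum>\<rho>\<in>{0,1}. battery_step \<eta> us xs (l + d) \<sigma> \<rho> * battery_kernel \<eta> us xs l d \<rho> \<tau>)"

lemma battery_kernel_eq_0:
  "us l \<Longrightarrow> \<tau> \<noteq> xs l \<Longrightarrow> battery_kernel \<eta> us xs l (Suc d) \<sigma> \<tau> = 0"
  by (induction d arbitrary: \<sigma>) (auto simp: battery_step_def fstrat_def ind_def)

section \<open>Weights of conditioning events\<close>

definition hist_event :: "((nat \<Rightarrow> bool) \<Rightarrow> (nat \<Rightarrow> nat) \<Rightarrow> bool) \<Rightarrow> nat \<Rightarrow> (nat \<Rightarrow> bool) \<Rightarrow> (nat \<Rightarrow> nat)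
    \<Rightarrow> nat \<Rightarrow> (nat \<Rightarrow> bool) \<Rightarrow> (nat \<Rightarrow> nat) \<Rightarrow> bool" where
  "hist_event H l us xs j u x \<longleftrightarrow> H u x \<and> (\<forall>t\<in>{l..j}. u t = us t \<and> x t = xs t)"

definition state_sum :: "real \<Rightarrow> nat \<Rightarrow> policy \<Rightarrow> nat \<Rightarrow> ((nat \<Rightarrow> bool) \<Rightarrow> (nat \<Rightarrow> nat) \<Rightarrow> real) \<Rightarrow> nat \<Rightarrow> real" where
  "state_sum \<eta> N pol j \<psi> \<sigma> = traj_sum \<eta> N pol j (\<lambda>(s,u,x,q). ind (s j = \<sigma>) * \<psi> u x)"

definition input_weight :: "real \<Rightarrow> (nat \<Rightarrow> bool) \<Rightarrow> (nat \<Rightarrow> nat) \<Rightarrow> nat \<Rightarrow> nat \<Rightarrow> (nat \<Rightarrow> real) \<Rightarrow> real" where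
  "input_weight \<eta> us xs l i \<phi> = (\<Sum>\<rho>\<in>{0,1}. \<phi> (fstrat (us i) \<rho>) * battery_kernel \<eta> us xs l (i - l) \<rho> (xs l))"

text \<open>\<open>H\<close> is the part of the conditioning event before time \<open>l\<close>; it has to fix the inputs from the
  last \<open>1\<close> at time \<open>k\<close> on.\<close>

context
  fixes \<eta> :: real and N :: nat and pol :: policy and us :: "nat \<Rightarrow> bool" and xs :: "nat \<Rightarrow> nat"
    and i l k :: nat and H :: "(nat \<Rightarrow> bool) \<Rightarrow> (nat \<Rightarrow> nat) \<Rightarrow> bool"
  assumes k_pos: "1 \<le> k" and k_le_l: "k \<le> l" and l_less_i: "l < i" and i_minus_k: "i - k \<le> N"
    and xs_k: "xs k = 1" and xs_after_k: "\<forall>t\<in>{k<..<i}. xs t = 0" and us_l: "us l"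
    and H_fixes: "\<forall>u x. H u x \<longrightarrow> (\<forall>t\<in>{k..<l}. x t = xs t)"
    and H_before_l: "\<forall>u x j v y. l \<le> j \<longrightarrow> H (u(j := v)) (x(j := y)) = H u x"
begin

lemma xs_l: "xs l \<in> {0,1}"
  using xs_k xs_after_k k_le_l l_less_i by (cases "k = l") auto

lemma hist_event_Suc:
  "l \<le> Suc j \<Longrightarrow> hist_event H l us xs (Suc j) (u(Suc j := v)) (x(Suc j := y))
     \<longleftrightarrow> hist_event H l us xs j u x \<and> v = us (Suc j) \<and> y = xs (Suc j)"
  unfolding hist_event_def using H_before_l by (auto simp: le_Suc_eq)

lemma hist_event_upd_later:
  "j < j' \<Longrightarrow> l \<le> j' \<Longrightarrow> hist_event H l us xs j (u(j' := v)) (x(j' := y)) = hist_event H l us xs j u x"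
  unfolding hist_event_def using H_before_l by auto

text \<open>For \<open>k \<le> j \<le> i - 2\<close> the counter is \<open>q\<^sub>j = j - k \<le> N - 2\<close>, and at time \<open>k\<close> the input is \<open>1\<close>,
  so the modification of the battery law never applies.\<close>

lemma PU_eq_PB:
  assumes "hist_event H l us xs j u x" "joint \<eta> N pol j (s,u,x,q) \<noteq> 0" "l \<le> Suc j" "Suc j < i"
  shows "PU \<eta> N \<sigma> (xs (Suc j)) (s j) (q j) = PB \<eta> \<sigma> (xs (Suc j)) (s j)"
proof (cases "Suc j = k")
  case True
  then show ?thesis using xs_k by (simp add: PU_def)
next
  case False
  then have "k \<le> j" using k_le_l assms(3) by simp
  have x_eq: "x t = xs t" if "k \<le> t" "t \<le> j" for t
    using assms(1) H_fixes that unfolding hist_event_def by (cases "t < l") auto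
  have "q (k + (j - k)) = j - k"
    using \<open>k \<le> j\<close> assms(4) i_minus_k x_eq xs_k xs_after_k
    by (intro counter_since_one[OF assms(2) k_pos]) auto
  moreover have "j - k + 2 \<le> N" using assms(4) i_minus_k \<open>k \<le> j\<close> by linarith
  ultimately show ?thesis using \<open>k \<le> j\<close> by (auto simp: PU_def)
qed

lemma slot_sum_hist_event:
  assumes "(s,u,x,q) \<in> Omega N j" "joint \<eta> N pol j (s,u,x,q) \<noteq> 0" "l \<le> Suc j" "Suc j < i" "\<sigma> \<in> {0,1}"
  shows "(\<Sum>t\<in>slots N. slot_weight \<eta> N pol j (s,u,x,q) t
      * (\<lambda>(s,u,x,q). ind (s (Suc j) = \<sigma>) * (ind (hist_event H l us xs (Suc j) u x) * \<psi> u x)) (traj_extend j (s,u,x,q) t))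
   = (\<Sum>\<rho>\<in>{0,1}. battery_step \<eta> us xs (Suc j) \<sigma> \<rho> * (ind (s j = \<rho>) * (ind (hist_event H l us xs j u x)
      * pol (map u [1..<Suc j]) (map x [1..<Suc j]) (us (Suc j)) * \<psi> (u(Suc j := us (Suc j))) (x(Suc j := xs (Suc j))))))"
proof -
  have s_j: "s j \<in> {0,1}" using Omega_last[OF assms(1)] by auto
  let ?P = "pol (map u [1..<Suc j]) (map x [1..<Suc j])"
  let ?f = "\<lambda>v. fstrat v (s j)"
  let ?E = "hist_event H l us xs j u x"
  have "(\<Sum>t\<in>slots N. slot_weight \<eta> N pol j (s,u,x,q) t
      * (\<lambda>(s,u,x,q). ind (s (Suc j) = \<sigma>) * (ind (hist_event H l us xs (Suc j) u x) * \<psi> u x)) (traj_extend j (s,u,x,q) t))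
     = (\<Sum>v\<in>UNIV. ?P v * (\<Sum>a\<in>{0,1}. PU \<eta> N a (?f v) (s j) (q j)
         * (ind (a = \<sigma>) * (ind (?E \<and> v = us (Suc j) \<and> ?f v = xs (Suc j)) * \<psi> (u(Suc j:=v)) (x(Suc j:=?f v))))))"
    unfolding sum_slots[OF assms(1)] by (simp add: traj_extend_def hist_event_Suc[OF assms(3)] del: upt_Suc)
  also have "\<dots> = (\<Sum>v\<in>UNIV. ?P v * (PU \<eta> N \<sigma> (?f v) (s j) (q j)
         * (ind (?E \<and> v = us (Suc j) \<and> ?f v = xs (Suc j)) * \<psi> (u(Suc j:=v)) (x(Suc j:=?f v)))))"
    using assms(5) by (auto simp: ind_def)
  also have "\<dots> = ?P (us (Suc j)) * (PU \<eta> N \<sigma> (xs (Suc j)) (s j) (q j)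
         * (ind (?E \<and> ?f (us (Suc j)) = xs (Suc j)) * \<psi> (u(Suc j:=us (Suc j))) (x(Suc j:=xs (Suc j)))))"
    by (cases "us (Suc j)") (auto simp: UNIV_bool ind_def simp del: upt_Suc)
  also have "\<dots> = ?P (us (Suc j)) * (PB \<eta> \<sigma> (xs (Suc j)) (s j)
         * (ind (?E \<and> ?f (us (Suc j)) = xs (Suc j)) * \<psi> (u(Suc j:=us (Suc j))) (x(Suc j:=xs (Suc j)))))"
    using PU_eq_PB[OF _ assms(2-4)] by (auto simp: ind_def)
  finally show ?thesis
    using s_j by (auto simp: ind_def battery_step_def simp del: upt_Suc)
qed

lemma state_sum_hist_event_Suc:
  assumes "l \<le> Suc j" "Suc j < i" "\<sigma> \<in> {0,1}"
  shows "state_sum \<eta> N pol (Suc j) (\<lambda>u x. ind (hist_event H l us xs (Suc j) u x) * \<psi> u x) \<sigma>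
    = (\<Sum>\<rho>\<in>{0,1}. battery_step \<eta> us xs (Suc j) \<sigma> \<rho> * state_sum \<eta> N pol j (\<lambda>u x. ind (hist_event H l us xs j u x)
        * pol (map u [1..<Suc j]) (map x [1..<Suc j]) (us (Suc j)) * \<psi> (u(Suc j := us (Suc j))) (x(Suc j := xs (Suc j)))) \<rho>)"
  unfolding state_sum_def traj_sum_Suc traj_sum_sum[symmetric]
proof (rule traj_sum_cong)
  fix \<omega> assume "\<omega> \<in> Omega N j" "joint \<eta> N pol j \<omega> \<noteq> 0"
  then show "(\<Sum>t\<in>slots N. slot_weight \<eta> N pol j \<omega> t
      * (\<lambda>(s,u,x,q). ind (s (Suc j) = \<sigma>) * (ind (hist_event H l us xs (Suc j) u x) * \<psi> u x)) (traj_extend j \<omega> t))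
    = (\<Sum>\<rho>\<in>{0,1}. battery_step \<eta> us xs (Suc j) \<sigma> \<rho> * (\<lambda>(s,u,x,q). ind (s j = \<rho>) * (ind (hist_event H l us xs j u x)
        * pol (map u [1..<Suc j]) (map x [1..<Suc j]) (us (Suc j)) * \<psi> (u(Suc j := us (Suc j))) (x(Suc j := xs (Suc j))))) \<omega>)"
    using slot_sum_hist_event assms by (cases \<omega>) simp
qed

text \<open>The weight \<open>\<Psi>\<close> collects the policy factors of times \<open>l, \<dots>, l + d - 1\<close>; only its independence
  of \<open>\<sigma>\<close> matters.\<close>

lemma state_sum_hist_event:
  assumes "d \<le> i - l"
  shows "\<exists>\<Psi>. \<forall>\<sigma>\<in>{0,1}. state_sum \<eta> N pol (l - 1 + d) (\<lambda>u x. ind (hist_event H l us xs (l - 1 + d) u x) * \<psi> u x) \<sigma>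
    = (\<Sum>\<tau>\<in>{0,1}. battery_kernel \<eta> us xs l d \<sigma> \<tau> * state_sum \<eta> N pol (l - 1) (\<lambda>u x. ind (H u x) * \<Psi> u x) \<tau>)"
  using assms
proof (induction d arbitrary: \<psi>)
  case 0
  have "hist_event H l us xs (l - 1) u x = H u x" for u x
    using k_pos k_le_l by (auto simp: hist_event_def)
  then show ?case
    by (intro exI[of _ \<psi>]) (auto simp: ind_def)
next
  case (Suc d)
  define j where "j = l - 1 + d"
  have j: "l - 1 + Suc d = Suc j" "l - 1 + d = j" "l + d = Suc j" "l \<le> Suc j" "Suc j < i"
    using Suc.prems k_pos k_le_l l_less_i unfolding j_def by auto
  obtain \<Psi> where IH: "\<forall>\<rho>\<in>{0,1}. state_sum \<eta> N pol j (\<lambda>u x. ind (hist_event H l us xs j u x)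
      * pol (map u [1..<Suc j]) (map x [1..<Suc j]) (us (Suc j)) * \<psi> (u(Suc j := us (Suc j))) (x(Suc j := xs (Suc j)))) \<rho>
    = (\<Sum>\<tau>\<in>{0,1}. battery_kernel \<eta> us xs l d \<rho> \<tau> * state_sum \<eta> N pol (l - 1) (\<lambda>u x. ind (H u x) * \<Psi> u x) \<tau>)"
    using Suc.IH[of "\<lambda>u x. pol (map u [1..<Suc j]) (map x [1..<Suc j]) (us (Suc j)) * \<psi> (u(Suc j := us (Suc j))) (x(Suc j := xs (Suc j)))"] Suc.prems
    unfolding j_def by (auto simp: mult.assoc)
  let ?K = "state_sum \<eta> N pol (l - 1) (\<lambda>u x. ind (H u x) * \<Psi> u x)"
  have "state_sum \<eta> N pol (Suc j) (\<lambda>u x. ind (hist_event H l us xs (Suc j) u x) * \<psi> u x) \<sigma>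
    = (\<Sum>\<tau>\<in>{0,1}. battery_kernel \<eta> us xs l (Suc d) \<sigma> \<tau> * ?K \<tau>)"
    if "\<sigma> \<in> {0,1}" for \<sigma>
  proof -
    have "state_sum \<eta> N pol (Suc j) (\<lambda>u x. ind (hist_event H l us xs (Suc j) u x) * \<psi> u x) \<sigma>
      = (\<Sum>\<rho>\<in>{0,1}. battery_step \<eta> us xs (Suc j) \<sigma> \<rho> * (\<Sum>\<tau>\<in>{0,1}. battery_kernel \<eta> us xs l d \<rho> \<tau> * ?K \<tau>))"
      unfolding state_sum_hist_event_Suc[OF j(4,5) that] using IH by (intro sum.cong) auto
    also have "\<dots> = (\<Sum>\<tau>\<in>{0,1}. (\<Sum>\<rho>\<in>{0,1}. battery_step \<eta> us xs (Suc j) \<sigma> \<rho> * battery_kernel \<eta> us xs l d \<rho> \<tau>) * ?K \<tau>)"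
      unfolding sum_distrib_left sum_distrib_right by (subst sum.swap) (simp add: ac_simps)
    finally show ?thesis
      by (simp add: j)
  qed
  then show ?case
    unfolding j by blast
qed

lemma slot_sum_next_input:
  assumes "(s,u,x,q) \<in> Omega N j" "l \<le> Suc j"
  shows "(\<Sum>t\<in>slots N. slot_weight \<eta> N pol j (s,u,x,q) t
      * (\<lambda>(s,u,x,q). ind (hist_event H l us xs j u x \<and> u (Suc j) = us (Suc j)) * \<phi> (x (Suc j))) (traj_extend j (s,u,x,q) t))
    = (\<Sum>\<rho>\<in>{0,1}. \<phi> (fstrat (us (Suc j)) \<rho>)
      * (ind (s j = \<rho>) * (ind (hist_event H l us xs j u x) * pol (map u [1..<Suc j]) (map x [1..<Suc j]) (us (Suc j)))))"
proof -
  have s_j: "s j \<in> {0,1}" using Omega_last[OF assms(1)] by auto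
  have "(\<Sum>t\<in>slots N. slot_weight \<eta> N pol j (s,u,x,q) t
      * (\<lambda>(s,u,x,q). ind (hist_event H l us xs j u x \<and> u (Suc j) = us (Suc j)) * \<phi> (x (Suc j))) (traj_extend j (s,u,x,q) t))
    = (\<Sum>v\<in>UNIV. pol (map u [1..<Suc j]) (map x [1..<Suc j]) v * ((\<Sum>a\<in>{0,1}. PU \<eta> N a (fstrat v (s j)) (s j) (q j))
        * (ind (hist_event H l us xs j u x \<and> v = us (Suc j)) * \<phi> (fstrat v (s j)))))"
    unfolding sum_slots[OF assms(1)] sum_distrib_right
    by (simp add: traj_extend_def hist_event_upd_later[OF _ assms(2)] mult.assoc del: upt_Suc)
  then show ?thesis
    unfolding sum_PU using s_j by (cases "us (Suc j)") (auto simp: UNIV_bool ind_def simp del: upt_Suc)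
qed

lemma traj_sum_next_input:
  obtains K where "\<And>\<phi>. traj_sum \<eta> N pol i (\<lambda>(s,u,x,q). ind (hist_event H l us xs (i - 1) u x \<and> u i = us i) * \<phi> (x i))
    = input_weight \<eta> us xs l i \<phi> * K"
proof -
  obtain j where i: "i = Suc j" using l_less_i by (cases i) auto
  have j: "l - 1 + (i - l) = j" "l \<le> Suc j" using i l_less_i k_pos k_le_l by auto
  define \<psi> where "\<psi> u x = pol (map u [1..<Suc j]) (map x [1..<Suc j]) (us (Suc j))" for u x
  obtain \<Psi> where \<Psi>: "\<forall>\<sigma>\<in>{0,1}. state_sum \<eta> N pol j (\<lambda>u x. ind (hist_event H l us xs j u x) * \<psi> u x) \<sigma>
    = (\<Sum>\<tau>\<in>{0,1}. battery_kernel \<eta> us xs l (i - l) \<sigma> \<tau> * state_sum \<eta> N pol (l - 1) (\<lambda>u x. ind (H u x) * \<Psi> u x) \<tau>)"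
    using state_sum_hist_event[of "i - l" \<psi>] unfolding j by blast
  let ?K = "state_sum \<eta> N pol (l - 1) (\<lambda>u x. ind (H u x) * \<Psi> u x)"
  have kernel_0: "battery_kernel \<eta> us xs l (i - l) \<rho> \<tau> = 0" if "\<tau> \<noteq> xs l" for \<rho> \<tau>
    using battery_kernel_eq_0[of us l \<tau> xs, OF us_l that] l_less_i by (cases "i - l") auto
  have "traj_sum \<eta> N pol i (\<lambda>(s,u,x,q). ind (hist_event H l us xs (i - 1) u x \<and> u i = us i) * \<phi> (x i))
    = input_weight \<eta> us xs l i \<phi> * ?K (xs l)" for \<phi>
  proof -
    have "traj_sum \<eta> N pol i (\<lambda>(s,u,x,q). ind (hist_event H l us xs (i - 1) u x \<and> u i = us i) * \<phi> (x i))
      = (\<Sum>\<rho>\<in>{0,1}. \<phi> (fstrat (us i) \<rho>) * state_sum \<eta> N pol j (\<lambda>u x. ind (hist_event H l us xs j u x) * \<psi> u x) \<rho>)"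
      unfolding i traj_sum_Suc state_sum_def traj_sum_sum[symmetric]
      by (rule traj_sum_cong) (use slot_sum_next_input j(2) in \<open>auto simp: \<psi>_def\<close>)
    also have "\<dots> = (\<Sum>\<rho>\<in>{0,1}. \<phi> (fstrat (us i) \<rho>) * (\<Sum>\<tau>\<in>{0,1}. battery_kernel \<eta> us xs l (i - l) \<rho> \<tau> * ?K \<tau>))"
      using \<Psi> by (intro sum.cong) auto
    also have "\<dots> = (\<Sum>\<rho>\<in>{0,1}. \<phi> (fstrat (us i) \<rho>) * (battery_kernel \<eta> us xs l (i - l) \<rho> (xs l) * ?K (xs l)))"
      using xs_l kernel_0 by (intro sum.cong) auto
    finally show ?thesis
      unfolding input_weight_def sum_distrib_right by (simp add: mult.assoc)
  qed
  then show ?thesis using that by blast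
qed

lemma cprb_next_input:
  assumes "valid_policy pol" "i \<le> n"
    and B_determined: "determined_upto i B"
    and B_eq: "\<And>s u x q. (s,u,x,q) \<in> Omega N i \<Longrightarrow> (s,u,x,q) \<in> B \<longleftrightarrow> hist_event H l us xs (i - 1) u x \<and> u i = us i"
    and B_pos: "prb \<eta> N pol n B > 0"
  shows "cprb \<eta> N pol n {(s,u,x,q). x i = y} B
    = input_weight \<eta> us xs l i (\<lambda>z. ind (z = y)) / input_weight \<eta> us xs l i (\<lambda>_. 1)"
proof -
  obtain K where K: "\<And>\<phi>. traj_sum \<eta> N pol i (\<lambda>(s,u,x,q). ind (hist_event H l us xs (i - 1) u x \<and> u i = us i) * \<phi> (x i))
    = input_weight \<eta> us xs l i \<phi> * K"
    using traj_sum_next_input by blast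
  have prb_eq: "prb \<eta> N pol n (E \<inter> B) = input_weight \<eta> us xs l i \<phi> * K"
    if E_determined: "determined_upto i E"
      and E_eq: "\<And>s u x q. ind ((s,u,x,q) \<in> E) = \<phi> (x i)" for E \<phi>
  proof -
    have "prb \<eta> N pol n (E \<inter> B) = traj_sum \<eta> N pol i (\<lambda>\<omega>. ind (\<omega> \<in> E \<inter> B))"
      using assms(1,2) E_determined B_determined by (intro prb_eq_traj_sum determined_upto_Int)
    also have "\<dots> = traj_sum \<eta> N pol i (\<lambda>(s,u,x,q). ind (hist_event H l us xs (i - 1) u x \<and> u i = us i) * \<phi> (x i))"
    proof (rule traj_sum_cong)
      fix \<omega> assume \<omega>: "\<omega> \<in> Omega N i"
      obtain s u x q where \<omega>_eq: "\<omega> = (s,u,x,q)" by (cases \<omega>) auto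
      have "ind (\<omega> \<in> E \<inter> B) = ind (\<omega> \<in> B) * ind (\<omega> \<in> E)"
        by (simp add: ind_def)
      then show "ind (\<omega> \<in> E \<inter> B) = (\<lambda>(s,u,x,q). ind (hist_event H l us xs (i - 1) u x \<and> u i = us i) * \<phi> (x i)) \<omega>"
        using B_eq[of s u x q] E_eq[of s u x q] \<omega> unfolding \<omega>_eq by simp
    qed
    finally show ?thesis
      unfolding K .
  qed
  have "prb \<eta> N pol n ({(s,u,x,q). x i = y} \<inter> B) = input_weight \<eta> us xs l i (\<lambda>z. ind (z = y)) * K"
    by (rule prb_eq) (auto simp: determined_upto_def)
  moreover have "prb \<eta> N pol n B = input_weight \<eta> us xs l i (\<lambda>_. 1) * K"
    using prb_eq[of UNIV "\<lambda>_. 1"] by (simp add: determined_upto_def ind_def)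
  moreover have "K \<noteq> 0"
    using B_pos calculation(2) by auto
  ultimately show ?thesis
    unfolding cprb_def by simp
qed

end

section \<open>The window counter\<close>

lemma qwin_cong:
  assumes "\<forall>t\<le>i. x t = x' t"
  shows "qwin N x i = qwin N x' i"
proof -
  have same: "x t = x' t" if "t \<in> {i-N..i-1}" for t
    using assms that by auto
  have "(\<lambda>t. t \<in> {i-N..i-1} \<and> x t = 1) = (\<lambda>t. t \<in> {i-N..i-1} \<and> x' t = 1)"
    "(\<exists>t\<in>{i-N..i-1}. x t = 1) = (\<exists>t\<in>{i-N..i-1}. x' t = 1)"
    using same by (fastforce, fastforce)
  then show ?thesis
    unfolding qwin_def by (simp only:)
qed

lemma qwin_eq_iff_last_one:
  assumes "N + 1 \<le> i" "\<forall>t\<in>{i-N..i-1}. x t \<in> {0,1}" "i - N \<le> k" "k \<le> i - 1"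
  shows "qwin N x i = i - 1 - k \<longleftrightarrow> x k = 1 \<and> (\<forall>t\<in>{k<..i-1}. x t = 0)"
proof
  let ?P = "\<lambda>j. j \<in> {i-N..i-1} \<and> x j = 1"
  assume q: "qwin N x i = i - 1 - k"
  have ex: "\<exists>j\<in>{i-N..i-1}. x j = 1"
  proof (rule ccontr)
    assume "\<not> ?thesis"
    then have "qwin N x i = N" by (simp add: qwin_def)
    with q assms(1,3,4) show False by linarith
  qed
  then obtain j where "?P j" by blast
  define g where "g = Greatest ?P"
  have g: "?P g" "\<And>y. ?P y \<Longrightarrow> y \<le> g"
    unfolding g_def using GreatestI_nat[of ?P j "i - 1"] Greatest_le_nat[of ?P _ "i - 1"] \<open>?P j\<close> by auto
  have "qwin N x i = i - 1 - g"
    using ex by (simp add: qwin_def g_def)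
  with q g(1) assms(4) have "g = k" by auto
  have "x t = 0" if "t \<in> {k<..i-1}" for t
  proof -
    have "t \<in> {i-N..i-1}" "\<not> t \<le> g"
      using that assms(3) \<open>g = k\<close> by auto
    then show ?thesis
      using g(2)[of t] assms(2) by auto
  qed
  then show "x k = 1 \<and> (\<forall>t\<in>{k<..i-1}. x t = 0)"
    using g(1) \<open>g = k\<close> by simp
next
  let ?P = "\<lambda>j. j \<in> {i-N..i-1} \<and> x j = 1"
  assume last: "x k = 1 \<and> (\<forall>t\<in>{k<..i-1}. x t = 0)"
  have "?P k" using last assms(3,4) by simp
  have "Greatest ?P = k"
  proof (rule Greatest_equality)
    show "y \<le> k" if "?P y" for y using that last by (cases "k < y") auto
  qed fact
  then show "qwin N x i = i - 1 - k"
    using \<open>?P k\<close> unfolding qwin_def by auto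
qed

lemma obtain_last_one:
  fixes x :: "nat \<Rightarrow> nat" and i N :: nat
  assumes "\<forall>t\<in>{i-N..i-1}. x t \<in> {0,1}" "\<exists>t\<in>{i-N..i-1}. x t \<noteq> 0"
  obtains k where "i - N \<le> k" "k \<le> i - 1" "x k = 1" "\<forall>t\<in>{k<..i-1}. x t = 0"
proof -
  let ?P = "\<lambda>j. j \<in> {i-N..i-1} \<and> x j = 1"
  obtain j where "j \<in> {i-N..i-1}" "x j \<noteq> 0" using assms(2) by blast
  moreover have "x j \<in> {0,1}" using assms(1) \<open>j \<in> {i-N..i-1}\<close> by blast
  ultimately have "?P j" by auto
  define g where "g = Greatest ?P"
  have g: "?P g" "\<And>y. ?P y \<Longrightarrow> y \<le> g"
    unfolding g_def using GreatestI_nat[of ?P j "i - 1"] Greatest_le_nat[of ?P _ "i - 1"] \<open>?P j\<close> by auto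
  have "x t = 0" if "t \<in> {g<..i-1}" for t
  proof -
    have "t \<in> {i-N..i-1}" "\<not> t \<le> g"
      using that g(1) by auto
    then show ?thesis
      using g(2)[of t] assms(1) by auto
  qed
  then show ?thesis
    using that[of g] g(1) by auto
qed

lemma mem_full_history_iff:
  assumes "1 \<le> l" "l < i"
  shows "(s,u,x,q) \<in> {(s,u,x,q). (\<forall>j\<in>{1..i}. u j = us j) \<and> (\<forall>j\<in>{1..i-1}. x j = xs j)}
    \<longleftrightarrow> hist_event (\<lambda>u x. \<forall>t\<in>{1..<l}. u t = us t \<and> x t = xs t) l us xs (i - 1) u x \<and> u i = us i"
proof -
  have "{1..i} = {1..<l} \<union> {l..i-1} \<union> {i}" "{1..i-1} = {1..<l} \<union> {l..i-1}"
    using assms by auto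
  then show ?thesis
    unfolding hist_event_def mem_Collect_eq prod.case by (simp only: ball_Un ball_simps ball_conj_distrib) blast
qed

lemma mem_window_history_iff:
  assumes "N + 1 \<le> i" "i - N \<le> k" "k \<le> l" "l < i" "xs k = 1" "\<forall>t\<in>{k<..i-1}. xs t = 0"
    and "(s,u,x,q) \<in> Omega N i"
  shows "(s,u,x,q) \<in> {(s,u,x,q). (\<forall>j\<in>{l..i}. u j = us j) \<and> qwin N x i = i - 1 - k}
    \<longleftrightarrow> hist_event (\<lambda>u x. \<forall>t\<in>{k..<l}. x t = xs t) l us xs (i - 1) u x \<and> u i = us i"
proof -
  have "x t \<in> {0,1}" if "t \<in> {i-N..i-1}" for t
  proof -
    have "t \<in> {1..i}" using assms(1) that by auto
    then show ?thesis using assms(7) by (auto simp: Omega_def PiE_iff)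
  qed
  then have "\<forall>t\<in>{i-N..i-1}. x t \<in> {0,1}" ..
  moreover have "{k..i-1} = insert k {k<..i-1}"
    using assms(3,4) by auto
  ultimately have "qwin N x i = i - 1 - k \<longleftrightarrow> (\<forall>t\<in>{k..i-1}. x t = xs t)"
    using assms by (subst qwin_eq_iff_last_one) auto
  moreover have "{l..i} = {l..i-1} \<union> {i}" "{k..i-1} = {k..<l} \<union> {l..i-1}"
    using assms by auto
  ultimately show ?thesis
    unfolding hist_event_def by auto
qed

lemma determined_upto_full_history:
  "determined_upto i {(s,u,x,q). (\<forall>j\<in>{1..i}. u j = us j) \<and> (\<forall>j\<in>{1..i-1}. x j = xs j)}"
  unfolding determined_upto_def by fastforce

lemma determined_upto_window_history: "determined_upto i {(s,u,x,q). (\<forall>j\<in>{l..i}. u j = us j) \<and> qwin N x i = c}"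
  unfolding determined_upto_def
proof (intro allI impI)
  fix s s' x x' q q' :: "nat \<Rightarrow> nat" and u u' :: "nat \<Rightarrow> bool"
  assume agree: "\<forall>t\<le>i. u t = u' t \<and> x t = x' t"
  then have "qwin N x i = qwin N x' i"
    by (intro qwin_cong) auto
  with agree show "(s,u,x,q) \<in> {(s,u,x,q). (\<forall>j\<in>{l..i}. u j = us j) \<and> qwin N x i = c}
      \<longleftrightarrow> (s',u',x',q') \<in> {(s,u,x,q). (\<forall>j\<in>{l..i}. u j = us j) \<and> qwin N x i = c}"
    by auto
qed

theorem lemma6:
  fixes \<eta> :: real and N n i l :: nat
    and pol :: "bool list \<Rightarrow> nat list \<Rightarrow> bool \<Rightarrow> real"
    and xs :: "nat \<Rightarrow> nat" and us :: "nat \<Rightarrow> bool" and xi :: nat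
  assumes "0 \<le> \<eta>" "\<eta> \<le> 1" "1 \<le> N"
    and "valid_policy pol"
    and "N + 1 \<le> i" "i \<le> n"
    and "\<forall>j\<in>{1..i-1}. xs j \<in> {0,1}"
    and "\<exists>j\<in>{i-N..i-1}. xs j \<noteq> 0"
    and "i - (qwin N xs i + 1) \<le> l" "l \<le> i - 1" "us l"
    and "prb \<eta> N pol n {(s,u,x,q). (\<forall>j\<in>{1..i}. u j = us j) \<and> (\<forall>j\<in>{1..i-1}. x j = xs j)} > 0"
    and "prb \<eta> N pol n {(s,u,x,q). (\<forall>j\<in>{l..i}. u j = us j) \<and> qwin N x i = qwin N xs i} > 0"
  shows "cprb \<eta> N pol n {(s,u,x,q). x i = xi}
           {(s,u,x,q). (\<forall>j\<in>{1..i}. u j = us j) \<and> (\<forall>j\<in>{1..i-1}. x j = xs j)}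
       = cprb \<eta> N pol n {(s,u,x,q). x i = xi}
           {(s,u,x,q). (\<forall>j\<in>{l..i}. u j = us j) \<and> qwin N x i = qwin N xs i}"
proof -
  have xs_window: "\<forall>t\<in>{i-N..i-1}. xs t \<in> {0,1}"
    using assms(5,7) by auto
  obtain k where k: "i - N \<le> k" "k \<le> i - 1" "xs k = 1" "\<forall>t\<in>{k<..i-1}. xs t = 0"
    using obtain_last_one[OF xs_window assms(8)] by blast
  have q: "qwin N xs i = i - 1 - k"
    using qwin_eq_iff_last_one[OF assms(5) xs_window k(1,2)] k(3,4) by simp
  have k_l: "1 \<le> k" "k \<le> l" "l < i" "i - k \<le> N" "\<forall>t\<in>{k<..<i}. xs t = 0"
    using assms(5,9,10) k q by auto
  let ?law = "input_weight \<eta> us xs l i (\<lambda>z. ind (z = xi)) / input_weight \<eta> us xs l i (\<lambda>_. 1)"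
  let ?full = "{(s,u,x,q). (\<forall>j\<in>{1..i}. u j = us j) \<and> (\<forall>j\<in>{1..i-1}. x j = xs j)}"
  let ?window = "{(s,u,x,q). (\<forall>j\<in>{l..i}. u j = us j) \<and> qwin N x i = i - 1 - k}"
  have "cprb \<eta> N pol n {(s,u,x,q). x i = xi} ?full = ?law"
  proof (rule cprb_next_input[where k = k and H = "\<lambda>u x. \<forall>t\<in>{1..<l}. u t = us t \<and> x t = xs t"])
    show "(s,u,x,q) \<in> ?full \<longleftrightarrow> hist_event (\<lambda>u x. \<forall>t\<in>{1..<l}. u t = us t \<and> x t = xs t) l us xs (i - 1) u x \<and> u i = us i"
      for s q :: "nat \<Rightarrow> nat" and u x
      using k_l by (intro mem_full_history_iff) auto
  qed (use assms(4,6,11,12) k(3) k_l determined_upto_full_history in auto)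
  moreover have "cprb \<eta> N pol n {(s,u,x,q). x i = xi} ?window = ?law"
  proof (rule cprb_next_input[where k = k and H = "\<lambda>u x. \<forall>t\<in>{k..<l}. x t = xs t"])
    show "(s,u,x,q) \<in> ?window \<longleftrightarrow> hist_event (\<lambda>u x. \<forall>t\<in>{k..<l}. x t = xs t) l us xs (i - 1) u x \<and> u i = us i"
      if "(s,u,x,q) \<in> Omega N i" for s u x q
      using mem_window_history_iff[OF assms(5) k(1) k_l(2,3) k(3,4) that] .
  qed (use assms(4,6,11,13) k(3) k_l determined_upto_window_history q in auto)
  ultimately show ?thesis
    unfolding q by simp
qed

end
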